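(* Let $p$ be an odd prime, $S$ a symmetric multiset of elements of $\mathbb Z_p^n$, $G=\mathrm{Cay}(\mathbb Z_p^n,S)$, $S'=\biguplus_{k=1}^{(p-1)/2}kS$ (multiset union, $kS=\{ks:s\in S\}$), and $G'=\mathrm{Cay}(\mathbb Z_p^n,S')$. Then $$\phi(G)\le\phi(G')\le\frac{p+1}{4}\,\phi(G).$$
   Context: A multiset $S$ is symmetric if $x$ and $-x$ have equal multiplicity for all $x$. $\mathrm{Cay}(\Gamma,S)$ has vertex set $\Gamma$ and an edge $(v,v+s)$ for every $v$ and every element $s$ of $S$ (with multiplicity). For $Q\subseteq\Gamma$, $\partial Q$ is the multiset of edges $(i,j)$ with $i\in Q$, $j\notin Q$; $\phi_G(Q)=|\partial Q|/(|S||Q|)$ and $\phi(G)=\min\{\phi_G(Q):1\le|Q|\le|\Gamma|/2\}$. *)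

theory Defs
  imports Complex_Main "HOL-Library.Multiset" "HOL-Computational_Algebra.Primes"
begin

definition zpn :: "nat \<Rightarrow> nat \<Rightarrow> nat list set" where
  "zpn p n = {v. length v = n \<and> (\<forall>i<n. v ! i < p)}"

definition zadd :: "nat \<Rightarrow> nat list \<Rightarrow> nat list \<Rightarrow> nat list" where
  "zadd p u v = map2 (\<lambda>a b. (a + b) mod p) u v"

definition zneg :: "nat \<Rightarrow> nat list \<Rightarrow> nat list" where
  "zneg p v = map (\<lambda>a. (p - a) mod p) v"

definition zsmul :: "nat \<Rightarrow> nat \<Rightarrow> nat list \<Rightarrow> nat list" where
  "zsmul p k v = map (\<lambda>a. (k * a) mod p) v"

definition symmetric_ms :: "nat \<Rightarrow> nat \<Rightarrow> nat list multiset \<Rightarrow> bool" where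
  "symmetric_ms p n S \<longleftrightarrow> (\<forall>x\<in>zpn p n. count S x = count S (zneg p x))"

text \<open>Cayley (multi)graph Cay(Gamma,S) with edges (v, v+s) for every v and every
  element s of S with multiplicity.\<close>

definition cay_boundary :: "('a \<Rightarrow> 'a \<Rightarrow> 'a) \<Rightarrow> 'a multiset \<Rightarrow> 'a set \<Rightarrow> nat" where
  "cay_boundary add S Q = (\<Sum>v\<in>Q. size (filter_mset (\<lambda>s. add v s \<notin> Q) S))"

definition cay_expansion :: "('a \<Rightarrow> 'a \<Rightarrow> 'a) \<Rightarrow> 'a multiset \<Rightarrow> 'a set \<Rightarrow> real" where
  "cay_expansion add S Q = real (cay_boundary add S Q) / (real (size S) * real (card Q))"

definition cay_phi :: "'a set \<Rightarrow> ('a \<Rightarrow> 'a \<Rightarrow> 'a) \<Rightarrow> 'a multiset \<Rightarrow> real" where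
  "cay_phi Gamma add S = Min {cay_expansion add S Q | Q. Q \<subseteq> Gamma \<and> 1 \<le> card Q
       \<and> real (card Q) \<le> real (card Gamma) / 2}"

end

theory Submission
  imports Defs "HOL-Number_Theory.Cong"
begin

text \<open>Write \<open>d(s,Q)\<close> for the number of \<open>v \<in> Q\<close> with \<open>v + s \<notin> Q\<close>, so that the
  boundary of \<open>Q\<close> in \<open>Cay(\<Gamma>,S)\<close> has size \<open>\<Sum>s\<in>S. d(s,Q)\<close>. Since translation by \<open>a\<close> is
  injective, \<open>d(a+b,Q) \<le> d(a,Q) + d(b,Q)\<close>, hence \<open>d(ks,Q) \<le> k d(s,Q)\<close>. The expansion of \<open>Q\<close>
  w.r.t. \<open>S'\<close> is the average over \<open>k = 1..(p-1)/2\<close> of its expansions w.r.t. \<open>kS\<close>, which are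
  at most \<open>k\<close> times its expansion w.r.t. \<open>S\<close>; the average of \<open>k\<close> is \<open>(p+1)/4\<close>.
  Conversely, for \<open>0 < k < p\<close> multiplication by \<open>k' = k\<^sup>-\<^sup>1 mod p\<close> is an automorphism of
  \<open>\<int>\<^sub>p\<^sup>n\<close> with \<open>d(ks,Q) = d(s,k'Q)\<close>, so the expansion of \<open>Q\<close> w.r.t. \<open>kS\<close> is that of
  the equally large set \<open>k'Q\<close> w.r.t. \<open>S\<close>, hence at least \<open>\<phi>(G)\<close>.
  Neither bound uses the symmetry of \<open>S\<close>.\<close>

lemma zpn_eq_lists: "zpn p n = {xs. set xs \<subseteq> {..<p} \<and> length xs = n}"
  by (auto simp: zpn_def subset_iff in_set_conv_nth)

lemma finite_zpn: "finite (zpn p n)"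
  unfolding zpn_eq_lists by (rule finite_lists_length_eq) simp

lemma card_zpn: "card (zpn p n) = p ^ n"
  unfolding zpn_eq_lists by (simp add: card_lists_length_eq)

lemma length_zpn: "v \<in> zpn p n \<Longrightarrow> length v = n"
  by (simp add: zpn_def)

lemma zadd_in_zpn: "p > 0 \<Longrightarrow> u \<in> zpn p n \<Longrightarrow> v \<in> zpn p n \<Longrightarrow> zadd p u v \<in> zpn p n"
  by (simp add: zpn_def zadd_def)

lemma zsmul_in_zpn: "p > 0 \<Longrightarrow> length v = n \<Longrightarrow> zsmul p k v \<in> zpn p n"
  by (simp add: zpn_def zsmul_def)

lemma zadd_assoc:
  "length u = length v \<Longrightarrow> length v = length w \<Longrightarrow>
   zadd p (zadd p u v) w = zadd p u (zadd p v w)"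
  by (rule nth_equalityI) (simp_all add: zadd_def mod_add_left_eq mod_add_right_eq add.assoc)

lemma zadd_right_cancel:
  assumes "u \<in> zpn p n" "w \<in> zpn p n" "length v = n" "zadd p u v = zadd p w v"
  shows "u = w"
proof (rule nth_equalityI)
  show "length u = length w" using assms by (simp add: zpn_def)
  fix i assume i: "i < length u"
  have "zadd p u v ! i = zadd p w v ! i" using assms(4) by simp
  hence "(u!i + v!i) mod p = (w!i + v!i) mod p"
    using i assms(1-3) by (simp add: zadd_def zpn_def)
  hence "u!i mod p = w!i mod p"
    using cong_add_rcancel_nat unfolding cong_def by blast
  moreover have "u!i < p" "w!i < p" using assms i by (auto simp: zpn_def)
  ultimately show "u!i = w!i" by simp
qed

lemma zadd_replicate_0: "v \<in> zpn p n \<Longrightarrow> zadd p v (replicate n 0) = v"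
  by (rule nth_equalityI) (auto simp: zadd_def zpn_def)

lemma zsmul_0: "zsmul p 0 v = replicate (length v) 0"
  by (rule nth_equalityI) (auto simp: zsmul_def)

lemma zsmul_Suc: "zsmul p (Suc k) v = zadd p (zsmul p k v) v"
  by (rule nth_equalityI) (simp_all add: zsmul_def zadd_def mod_add_right_eq add.commute)

lemma zsmul_zadd:
  "length u = length v \<Longrightarrow> zsmul p k (zadd p u v) = zadd p (zsmul p k u) (zsmul p k v)"
  by (rule nth_equalityI) (simp_all add: zsmul_def zadd_def mod_add_eq mod_mult_right_eq distrib_left)

lemma zsmul_zsmul: "zsmul p a (zsmul p b v) = zsmul p (a * b) v"
  by (rule nth_equalityI) (simp_all add: zsmul_def mod_mult_right_eq mult.assoc)

lemma zsmul_cong_1: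
  assumes "[k = 1] (mod p)" "v \<in> zpn p n"
  shows "zsmul p k v = v"
proof (rule nth_equalityI)
  fix i assume "i < length (zsmul p k v)"
  hence "v ! i < p" using assms(2) by (simp add: zpn_def zsmul_def)
  moreover have "(k * v ! i) mod p = (1 * v ! i) mod p"
    using assms(1) unfolding cong_def by (metis mod_mult_left_eq)
  ultimately show "zsmul p k v ! i = v ! i"
    using \<open>i < length (zsmul p k v)\<close> by (simp add: zsmul_def)
qed (simp add: zsmul_def)

lemma zsmul_inverse:
  "[k' * k = 1] (mod p) \<Longrightarrow> v \<in> zpn p n \<Longrightarrow> zsmul p k' (zsmul p k v) = v"
  by (simp add: zsmul_zsmul zsmul_cong_1)

lemma inj_on_zsmul: "[k' * k = 1] (mod p) \<Longrightarrow> inj_on (zsmul p k) (zpn p n)"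
  by (metis inj_onI zsmul_inverse)

lemma cong_inverse_exists_prime:
  fixes p k :: nat
  assumes "prime p" "0 < k" "k < p"
  shows "\<exists>k'. [k * k' = 1] (mod p)"
proof -
  have "\<not> p dvd k" using assms(2,3) by (auto dest: dvd_imp_le)
  hence "coprime k p" using assms(1) prime_imp_coprime coprime_commute by blast
  thus ?thesis using cong_solve_coprime_nat[of k p] by simp
qed

definition shift_boundary :: "('a \<Rightarrow> 'a \<Rightarrow> 'a) \<Rightarrow> 'a \<Rightarrow> 'a set \<Rightarrow> nat" where
  "shift_boundary add s Q = card {v\<in>Q. add v s \<notin> Q}"

lemma cay_boundary_eq_sum_shift_boundary:
  "finite Q \<Longrightarrow> cay_boundary add S Q = (\<Sum>s\<in>#S. shift_boundary add s Q)"
proof (induction S)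
  case empty
  then show ?case by (simp add: cay_boundary_def)
next
  case (add s S)
  have "cay_boundary add (add_mset s S) Q
      = (\<Sum>v\<in>Q. (if add v s \<notin> Q then 1 else 0) + size (filter_mset (\<lambda>t. add v t \<notin> Q) S))"
    unfolding cay_boundary_def by (rule sum.cong) auto
  also have "\<dots> = (\<Sum>v\<in>Q. (if add v s \<notin> Q then 1 else 0)) + cay_boundary add S Q"
    by (simp add: sum.distrib cay_boundary_def)
  also have "(\<Sum>v\<in>Q. (if add v s \<notin> Q then 1 else 0)) = shift_boundary add s Q"
    using add.prems by (simp add: shift_boundary_def sum.If_cases Int_def)
  finally show ?case using add by simp
qed

lemma cay_boundary_sum:
  "cay_boundary add (\<Sum>k\<in>K. M k) Q = (\<Sum>k\<in>K. cay_boundary add (M k) Q)"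
  by (induction K rule: infinite_finite_induct) (simp_all add: cay_boundary_def sum.distrib)

lemma cay_expansion_sum:
  assumes "finite K" and "\<And>k. k \<in> K \<Longrightarrow> size (M k) = c"
  shows "cay_expansion add (\<Sum>k\<in>K. M k) Q = (\<Sum>k\<in>K. cay_expansion add (M k) Q) / card K"
proof -
  have "size (\<Sum>k\<in>K. M k) = card K * c" using assms by simp
  thus ?thesis
    using assms by (simp add: cay_expansion_def cay_boundary_sum sum_divide_distrib[symmetric])
qed

lemma shift_boundary_zadd_le:
  assumes Q: "Q \<subseteq> zpn p n" and a: "length a = n" and b: "length b = n"
  shows "shift_boundary (zadd p) (zadd p a b) Q
           \<le> shift_boundary (zadd p) a Q + shift_boundary (zadd p) b Q"
proof -
  have fin: "finite Q" using Q finite_zpn finite_subset by blast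
  let ?X = "{v\<in>Q. zadd p v a \<notin> Q}"
  let ?Y = "{v\<in>Q. zadd p v a \<in> Q \<and> zadd p (zadd p v a) b \<notin> Q}"
  let ?Z = "{w\<in>Q. zadd p w b \<notin> Q}"
  have "{v\<in>Q. zadd p v (zadd p a b) \<notin> Q} \<subseteq> ?X \<union> ?Y"
    using Q a b by (auto simp: zadd_assoc length_zpn)
  hence "shift_boundary (zadd p) (zadd p a b) Q \<le> card (?X \<union> ?Y)"
    unfolding shift_boundary_def using fin by (intro card_mono) auto
  also have "\<dots> \<le> card ?X + card ?Y" by (rule card_Un_le)
  also have "card ?Y \<le> card ?Z"
  proof (rule card_inj_on_le)
    show "inj_on (\<lambda>v. zadd p v a) ?Y"
      by (rule inj_onI) (use Q a in \<open>auto intro: zadd_right_cancel\<close>)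
  qed (use fin in auto)
  finally show ?thesis by (simp add: shift_boundary_def)
qed

lemma shift_boundary_zsmul_le:
  assumes Q: "Q \<subseteq> zpn p n" and s: "length s = n"
  shows "shift_boundary (zadd p) (zsmul p k s) Q \<le> k * shift_boundary (zadd p) s Q"
proof (induction k)
  case 0
  have "{v\<in>Q. zadd p v (replicate n 0) \<notin> Q} = {}" using Q zadd_replicate_0 by fastforce
  moreover have "zsmul p 0 s = replicate n 0" using s by (simp add: zsmul_0)
  ultimately show ?case by (simp only: shift_boundary_def) simp
next
  case (Suc k)
  have "shift_boundary (zadd p) (zsmul p (Suc k) s) Q
          \<le> shift_boundary (zadd p) (zsmul p k s) Q + shift_boundary (zadd p) s Q"
    unfolding zsmul_Suc by (rule shift_boundary_zadd_le[OF Q]) (simp_all add: zsmul_def s)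
  then show ?case using Suc by simp
qed

lemma shift_boundary_zsmul_eq:
  assumes p: "p > 0" and kk: "[k' * k = 1] (mod p)"
    and Q: "Q \<subseteq> zpn p n" and s: "s \<in> zpn p n"
  shows "shift_boundary (zadd p) (zsmul p k s) Q = shift_boundary (zadd p) s (zsmul p k' ` Q)"
proof -
  let ?f = "zsmul p k'"
  have "[k * k' = 1] (mod p)" using kk by (simp add: mult.commute)
  hence inj: "inj_on ?f (zpn p n)" by (rule inj_on_zsmul)
  have leaves_iff: "zadd p (?f v) s \<notin> ?f ` Q \<longleftrightarrow> zadd p v (zsmul p k s) \<notin> Q" if "v \<in> Q" for v
  proof -
    have v: "v \<in> zpn p n" using that Q by auto
    have ks: "zsmul p k s \<in> zpn p n" using s p by (simp add: zsmul_in_zpn length_zpn)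
    have "?f (zadd p v (zsmul p k s)) = zadd p (?f v) (?f (zsmul p k s))"
      using v s by (intro zsmul_zadd) (simp add: zsmul_def length_zpn)
    also have "?f (zsmul p k s) = s" using zsmul_inverse[OF kk s] .
    finally show ?thesis
      using inj_on_image_mem_iff[OF inj zadd_in_zpn[OF p v ks] Q] by simp
  qed
  have "{w\<in>?f ` Q. zadd p w s \<notin> ?f ` Q} = ?f ` {v\<in>Q. zadd p v (zsmul p k s) \<notin> Q}"
    using leaves_iff by auto
  moreover have "inj_on ?f {v\<in>Q. zadd p v (zsmul p k s) \<notin> Q}"
    by (rule inj_on_subset[OF inj]) (use Q in auto)
  ultimately show ?thesis unfolding shift_boundary_def by (simp add: card_image)
qed

lemma cay_expansion_zsmul_le:
  assumes Q: "Q \<subseteq> zpn p n" and S: "set_mset S \<subseteq> zpn p n"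
  shows "cay_expansion (zadd p) (image_mset (zsmul p k) S) Q \<le> k * cay_expansion (zadd p) S Q"
proof -
  have fin: "finite Q" using Q finite_zpn finite_subset by blast
  have "cay_boundary (zadd p) (image_mset (zsmul p k) S) Q
          \<le> (\<Sum>s\<in>#S. k * shift_boundary (zadd p) s Q)"
    unfolding cay_boundary_eq_sum_shift_boundary[OF fin] image_mset.compositionality o_def
    using S by (intro sum_mset_mono shift_boundary_zsmul_le[OF Q]) (auto simp: length_zpn)
  also have "\<dots> = k * cay_boundary (zadd p) S Q"
    by (simp add: cay_boundary_eq_sum_shift_boundary[OF fin] sum_mset_distrib_left)
  finally have "real (cay_boundary (zadd p) (image_mset (zsmul p k) S) Q)
                  \<le> real k * real (cay_boundary (zadd p) S Q)"
    by (metis of_nat_le_iff of_nat_mult)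
  thus ?thesis
    unfolding cay_expansion_def by (simp add: divide_right_mono)
qed

lemma cay_expansion_zsmul_eq:
  assumes p: "p > 0" and kk: "[k' * k = 1] (mod p)"
    and Q: "Q \<subseteq> zpn p n" and S: "set_mset S \<subseteq> zpn p n"
  shows "cay_expansion (zadd p) (image_mset (zsmul p k) S) Q
           = cay_expansion (zadd p) S (zsmul p k' ` Q)"
proof -
  have kk': "[k * k' = 1] (mod p)" using kk by (simp add: mult.commute)
  have fin: "finite Q" using Q finite_zpn finite_subset by blast
  have "card (zsmul p k' ` Q) = card Q"
    using inj_on_subset[OF inj_on_zsmul[OF kk'] Q] by (rule card_image)
  moreover have "cay_boundary (zadd p) (image_mset (zsmul p k) S) Q
                   = cay_boundary (zadd p) S (zsmul p k' ` Q)"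
    unfolding cay_boundary_eq_sum_shift_boundary[OF fin]
      cay_boundary_eq_sum_shift_boundary[OF finite_imageI[OF fin]] image_mset.compositionality o_def
    using S by (intro arg_cong[where f = sum_mset] image_mset_cong shift_boundary_zsmul_eq[OF p kk Q])
      auto
  ultimately show ?thesis by (simp add: cay_expansion_def)
qed

definition cay_cuts :: "'a set \<Rightarrow> 'a set set" where
  "cay_cuts Gamma = {Q. Q \<subseteq> Gamma \<and> 1 \<le> card Q \<and> real (card Q) \<le> real (card Gamma) / 2}"

lemma cay_phi_eq_Min: "cay_phi Gamma add S = Min (cay_expansion add S ` cay_cuts Gamma)"
  unfolding cay_phi_def cay_cuts_def by (rule arg_cong[where f = Min]) auto

lemma finite_cay_cuts: "finite Gamma \<Longrightarrow> finite (cay_cuts Gamma)"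
  unfolding cay_cuts_def by (rule finite_subset[of _ "Pow Gamma"]) auto

lemma cay_phi_le_cay_expansion:
  "finite Gamma \<Longrightarrow> Q \<in> cay_cuts Gamma \<Longrightarrow> cay_phi Gamma add S \<le> cay_expansion add S Q"
  unfolding cay_phi_eq_Min by (simp add: finite_cay_cuts)

lemma cay_phi_greatest:
  assumes "finite Gamma" "cay_cuts Gamma \<noteq> {}"
    and "\<And>Q. Q \<in> cay_cuts Gamma \<Longrightarrow> x \<le> cay_expansion add S Q"
  shows "x \<le> cay_phi Gamma add S"
  unfolding cay_phi_eq_Min using assms by (simp add: finite_cay_cuts)

lemma cay_phi_le_scaled:
  assumes "finite Gamma" "cay_cuts Gamma \<noteq> {}"
    and "\<And>Q. Q \<in> cay_cuts Gamma \<Longrightarrow> cay_expansion add T Q \<le> c * cay_expansion add S Q"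
  shows "cay_phi Gamma add T \<le> c * cay_phi Gamma add S"
proof -
  have "cay_phi Gamma add S \<in> cay_expansion add S ` cay_cuts Gamma"
    unfolding cay_phi_eq_Min using assms(1,2) by (intro Min_in finite_imageI finite_cay_cuts) auto
  then obtain Q where Q: "Q \<in> cay_cuts Gamma" "cay_phi Gamma add S = cay_expansion add S Q"
    by blast
  have "cay_phi Gamma add T \<le> cay_expansion add T Q"
    using assms(1) Q(1) by (rule cay_phi_le_cay_expansion)
  also have "\<dots> \<le> c * cay_phi Gamma add S" using assms(3)[OF Q(1)] Q(2) by simp
  finally show ?thesis .
qed

lemma singleton_in_cay_cuts_zpn:
  assumes "p \<ge> 2" "n \<ge> 1"
  shows "{replicate n 0} \<in> cay_cuts (zpn p n)"
proof -
  have "p \<le> p ^ n" using assms by (intro self_le_power) auto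
  hence "(2::real) \<le> real (card (zpn p n))" unfolding card_zpn using assms(1) by linarith
  thus ?thesis using assms by (simp add: cay_cuts_def zpn_def)
qed

lemma cay_phi_le_cay_expansion_zsmul:
  assumes p: "prime p" and k: "0 < k" "k < p"
    and S: "set_mset S \<subseteq> zpn p n" and Q: "Q \<in> cay_cuts (zpn p n)"
  shows "cay_phi (zpn p n) (zadd p) S \<le> cay_expansion (zadd p) (image_mset (zsmul p k) S) Q"
proof -
  obtain k' where kk: "[k * k' = 1] (mod p)" using cong_inverse_exists_prime[OF p k] by blast
  have kk': "[k' * k = 1] (mod p)" using kk by (simp add: mult.commute)
  have p0: "p > 0" using p prime_gt_0_nat by blast
  have QG: "Q \<subseteq> zpn p n" using Q by (simp add: cay_cuts_def)
  have "zsmul p k' ` Q \<subseteq> zpn p n"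
    using QG p0 by (intro image_subsetI zsmul_in_zpn) (auto simp: length_zpn)
  moreover have "card (zsmul p k' ` Q) = card Q"
    using inj_on_subset[OF inj_on_zsmul[OF kk] QG] by (rule card_image)
  ultimately have "zsmul p k' ` Q \<in> cay_cuts (zpn p n)" using Q by (simp add: cay_cuts_def)
  hence "cay_phi (zpn p n) (zadd p) S \<le> cay_expansion (zadd p) S (zsmul p k' ` Q)"
    by (rule cay_phi_le_cay_expansion[OF finite_zpn])
  also have "\<dots> = cay_expansion (zadd p) (image_mset (zsmul p k) S) Q"
    using cay_expansion_zsmul_eq[OF p0 kk' QG S] ..
  finally show ?thesis .
qed

lemma cay_expansion_dilation_sum_le:
  assumes m: "m \<ge> 1" and Q: "Q \<subseteq> zpn p n" and S: "set_mset S \<subseteq> zpn p n"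
  shows "cay_expansion (zadd p) (\<Sum>k\<in>{1..m}. image_mset (zsmul p k) S) Q
           \<le> (real m + 1) / 2 * cay_expansion (zadd p) S Q"
proof -
  let ?e = "cay_expansion (zadd p) S Q"
  have "cay_expansion (zadd p) (\<Sum>k\<in>{1..m}. image_mset (zsmul p k) S) Q
          = (\<Sum>k\<in>{1..m}. cay_expansion (zadd p) (image_mset (zsmul p k) S) Q) / real m"
    by (subst cay_expansion_sum[where c = "size S"]) simp_all
  also have "\<dots> \<le> (\<Sum>k\<in>{1..m}. real k * ?e) / real m"
    by (intro divide_right_mono sum_mono cay_expansion_zsmul_le[OF Q S]) simp_all
  also have "(\<Sum>k\<in>{1..m}. real k * ?e) = real m * (real m + 1) / 2 * ?e"
    using double_gauss_sum_from_Suc_0[of m, where 'a = real]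
    by (simp add: sum_distrib_right[symmetric])
  finally show ?thesis using m by simp
qed

lemma cay_phi_le_cay_expansion_dilation_sum:
  assumes p: "prime p" and m: "1 \<le> m" "m < p"
    and S: "set_mset S \<subseteq> zpn p n" and Q: "Q \<in> cay_cuts (zpn p n)"
  shows "cay_phi (zpn p n) (zadd p) S
           \<le> cay_expansion (zadd p) (\<Sum>k\<in>{1..m}. image_mset (zsmul p k) S) Q"
proof -
  let ?\<phi> = "cay_phi (zpn p n) (zadd p) S"
  have "?\<phi> = (\<Sum>k\<in>{1..m}. ?\<phi>) / real m" using m by simp
  also have "\<dots> \<le> (\<Sum>k\<in>{1..m}. cay_expansion (zadd p) (image_mset (zsmul p k) S) Q) / real m"
    using m by (intro divide_right_mono sum_mono cay_phi_le_cay_expansion_zsmul[OF p _ _ S Q]) auto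
  also have "\<dots> = cay_expansion (zadd p) (\<Sum>k\<in>{1..m}. image_mset (zsmul p k) S) Q"
    by (subst cay_expansion_sum[where c = "size S"]) simp_all
  finally show ?thesis .
qed

theorem lemmaC2:
  fixes p n :: nat and S :: "nat list multiset"
  assumes "prime p" and "odd p" and "n \<ge> 1"
    and "set_mset S \<subseteq> zpn p n"
    and "symmetric_ms p n S"
  defines "S' \<equiv> (\<Sum>k\<in>{1..(p - 1) div 2}. image_mset (zsmul p k) S)"
  shows "cay_phi (zpn p n) (zadd p) S \<le> cay_phi (zpn p n) (zadd p) S'
       \<and> cay_phi (zpn p n) (zadd p) S' \<le> (real p + 1) / 4 * cay_phi (zpn p n) (zadd p) S"
proof
  define m where "m = (p - 1) div 2"
  have "p \<ge> 2" using assms(1) prime_ge_2_nat by blast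
  hence p: "p = 2 * m + 1" "m \<ge> 1" using assms(2) unfolding m_def by (auto elim!: oddE)
  have S': "S' = (\<Sum>k\<in>{1..m}. image_mset (zsmul p k) S)" unfolding S'_def m_def ..
  have cuts: "cay_cuts (zpn p n) \<noteq> {}"
    using singleton_in_cay_cuts_zpn[OF \<open>p \<ge> 2\<close> assms(3)] by blast
  show "cay_phi (zpn p n) (zadd p) S \<le> cay_phi (zpn p n) (zadd p) S'"
    using p unfolding S'
    by (intro cay_phi_greatest[OF finite_zpn cuts] cay_phi_le_cay_expansion_dilation_sum assms) auto
  have scale: "(real p + 1) / 4 = (real m + 1) / 2" using p(1) by simp
  show "cay_phi (zpn p n) (zadd p) S' \<le> (real p + 1) / 4 * cay_phi (zpn p n) (zadd p) S"
  proof (rule cay_phi_le_scaled[OF finite_zpn cuts])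
    fix Q assume "Q \<in> cay_cuts (zpn p n)"
    hence "Q \<subseteq> zpn p n" by (simp add: cay_cuts_def)
    then show "cay_expansion (zadd p) S' Q \<le> (real p + 1) / 4 * cay_expansion (zadd p) S Q"
      unfolding S' scale by (rule cay_expansion_dilation_sum_le[OF p(2) _ assms(4)])
  qed
qed

end
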